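(* Let $0<q<1$, $p\ge1$ an integer, $s\in\mathbb{C}$. For every integer $n\ge0$, $$\Big(s\,(D_x^q)^p-q^{p-n}\,x\,D_x^q+q^{p-n}\{n\}_q\Big)\mathcal{H}_{n,p}(x,s|q)=0.$$
   Context: For $m\ge0$: $\{m\}_q=\frac{1-q^m}{1-q}$, $\{m\}_q!=\prod_{j=1}^m\{j\}_q$, $\{0\}_q!=1$. The $q$-derivative is $D_x^qf(x)=\frac{f(x)-f(qx)}{(1-q)x}$. $E_{Q}(y)=\sum_{k\ge0}\frac{Q^{k(k-1)/2}}{\{k\}_Q!}y^k$. The doubly indexed Hermite polynomials are $$\mathcal{H}_{n,p}(x,s|q)=E_{q^p}\!\left(-s\frac{(D_x^q)^p}{\{p\}_q}\right)(x^n)=\sum_{k\ge0}\frac{q^{pk(k-1)/2}}{\{k\}_{q^p}!}\Big(\frac{-s}{\{p\}_q}\Big)^k(D_x^q)^{pk}x^n$$ (a finite sum). *)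

theory Defs
  imports Complex_Main
begin

definition qnum :: "complex \<Rightarrow> nat \<Rightarrow> complex" where
  "qnum q m = (1 - q ^ m) / (1 - q)"

definition qfact :: "complex \<Rightarrow> nat \<Rightarrow> complex" where
  "qfact q m = (\<Prod>j=1..m. qnum q j)"

definition qderiv :: "complex \<Rightarrow> (complex \<Rightarrow> complex) \<Rightarrow> complex \<Rightarrow> complex" where
  "qderiv q f x = (f x - f (q * x)) / ((1 - q) * x)"

text \<open>Doubly indexed q-Hermite polynomial H_{n,p}(x,s|q). The series over k is finite:
  for p >= 1 and k > n the term (D_x^q)^{pk} x^n vanishes, so summing over k <= n
  gives the full sum.\<close>
definition qHermite :: "nat \<Rightarrow> nat \<Rightarrow> complex \<Rightarrow> complex \<Rightarrow> complex \<Rightarrow> complex" where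
  "qHermite n p x s q =
     (\<Sum>k\<le>n. q ^ (p * (k * (k - 1) div 2)) / qfact (q ^ p) k
              * (- s / qnum q p) ^ k
              * ((qderiv q ^^ (p * k)) (\<lambda>y. y ^ n)) x)"

end

theory Submission
  imports Defs
begin

(* Write H = sum_k a_k D^(pk) x^n. On these terms D^p shifts k to k + 1, while x D and
   multiplication by {n}_q act as the scalars {n - pk}_q and {n}_q, whose difference is
   q^(n - pk) {pk}_q. The equation therefore reduces to a first-order recurrence for the
   coefficients a_k, which follows from {k + 1}_(q^p) {p}_q = {p(k + 1)}_q; the sum telescopes
   because D^(p(n + 1)) x^n = 0. *)

lemma qnum_0 [simp]: "qnum Q 0 = 0"
  by (simp add: qnum_def)

lemma qnum_power_mult: "qnum (Q ^ p) k * qnum Q p = qnum Q (p * k)"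
  by (cases "Q ^ p = 1") (simp_all add: qnum_def power_mult)

lemma qnum_diff:
  assumes "m \<le> n"
  shows "qnum Q n - qnum Q (n - m) = Q ^ (n - m) * qnum Q m"
proof -
  have "Q ^ n = Q ^ (n - m) * Q ^ m"
    using assms by (simp flip: power_add)
  then show ?thesis
    by (simp add: qnum_def diff_divide_distrib [symmetric] algebra_simps)
qed

lemma qnum_nonzero:
  assumes "Q ^ m \<noteq> 1" "Q \<noteq> 1"
  shows "qnum Q m \<noteq> 0"
  using assms by (simp add: qnum_def)

lemma qfact_Suc: "qfact Q (Suc k) = qfact Q k * qnum Q (Suc k)"
  by (simp add: qfact_def)

lemma qderiv_iter_sum:
  "(qderiv Q ^^ j) (\<lambda>y. \<Sum>k\<in>A. c k * g k y) = (\<lambda>y. \<Sum>k\<in>A. c k * (qderiv Q ^^ j) (g k) y)"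
proof (induction j)
  case 0
  then show ?case by simp
next
  case (Suc j)
  show ?case
    unfolding funpow.simps comp_def Suc
    by (rule ext) (simp add: qderiv_def sum_subtractf [symmetric] sum_divide_distrib algebra_simps)
qed

definition qfalling :: "complex \<Rightarrow> nat \<Rightarrow> nat \<Rightarrow> complex" where
  "qfalling Q n m = (\<Prod>j<m. qnum Q (n - j))"

lemma qfalling_0 [simp]: "qfalling Q n 0 = 1"
  by (simp add: qfalling_def)

lemma qfalling_Suc: "qfalling Q n (Suc m) = qfalling Q n m * qnum Q (n - m)"
  by (simp add: qfalling_def)

lemma qfalling_eq_0: "n < m \<Longrightarrow> qfalling Q n m = 0"
  unfolding qfalling_def by (rule prod_zero) (auto intro!: bexI [of _ n])

lemma qderiv_iter_power:
  assumes "Q \<noteq> 0" "Q \<noteq> 1" "x \<noteq> 0"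
  shows "(qderiv Q ^^ m) (\<lambda>y. y ^ n) x = qfalling Q n m * x ^ (n - m)"
  using assms(3)
proof (induction m arbitrary: x)
  case 0
  then show ?case by simp
next
  case (Suc m)
  have "Q * x \<noteq> 0"
    using Suc.prems assms by simp
  then have "(qderiv Q ^^ Suc m) (\<lambda>y. y ^ n) x
      = qfalling Q n m * (x ^ (n - m) - (Q * x) ^ (n - m)) / ((1 - Q) * x)"
    by (simp add: qderiv_def Suc.IH Suc.prems right_diff_distrib)
  also have "\<dots> = qfalling Q n (Suc m) * x ^ (n - Suc m)"
  proof (cases "n - m")
    case (Suc r)
    then have "n - Suc m = r" by simp
    with Suc Suc.prems assms show ?thesis
      by (simp add: qfalling_Suc qnum_def field_simps power_mult_distrib)
  qed (simp add: qfalling_Suc)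
  finally show ?case .
qed

lemma x_mult_qderiv_iter_power:
  assumes "Q \<noteq> 0" "Q \<noteq> 1" "x \<noteq> 0"
  shows "x * (qderiv Q ^^ Suc m) (\<lambda>y. y ^ n) x = qnum Q (n - m) * (qderiv Q ^^ m) (\<lambda>y. y ^ n) x"
proof -
  have "x * (qfalling Q n (Suc m) * x ^ (n - Suc m)) = qnum Q (n - m) * (qfalling Q n m * x ^ (n - m))"
  proof (cases "n - m")
    case (Suc r)
    then have "n - Suc m = r" by simp
    with Suc show ?thesis by (simp add: qfalling_Suc)
  qed (simp add: qfalling_Suc)
  then show ?thesis
    by (simp only: qderiv_iter_power [OF assms])
qed

definition qHermite_coeff :: "complex \<Rightarrow> nat \<Rightarrow> complex \<Rightarrow> nat \<Rightarrow> complex" where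
  "qHermite_coeff Q p s k = Q ^ (p * (k * (k - 1) div 2)) / qfact (Q ^ p) k * (- s / qnum Q p) ^ k"

lemma qderiv_iter_qHermite:
  "(qderiv Q ^^ j) (\<lambda>y. qHermite n p y s Q)
     = (\<lambda>y. \<Sum>k\<le>n. qHermite_coeff Q p s k * (qderiv Q ^^ (j + p * k)) (\<lambda>y. y ^ n) y)"
  unfolding qHermite_def qderiv_iter_sum by (simp add: qHermite_coeff_def funpow_add)

lemma triangular_Suc: "Suc k * k div 2 = k * (k - 1) div 2 + k"
proof -
  have "Suc k * k = k * (k - 1) + 2 * k"
    by (cases k) (auto simp: algebra_simps)
  then show ?thesis by simp
qed

lemma qHermite_coeff_Suc:
  "qHermite_coeff Q p s (Suc k)
     = Q ^ (p * k) / qnum (Q ^ p) (Suc k) * (- s / qnum Q p) * qHermite_coeff Q p s k"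
proof -
  have "Q ^ (p * (Suc k * (Suc k - 1) div 2)) = Q ^ (p * (k * (k - 1) div 2)) * Q ^ (p * k)"
    by (simp only: diff_Suc_1 triangular_Suc add_mult_distrib2 power_add)
  then show ?thesis
    by (simp add: qHermite_coeff_def qfact_Suc divide_inverse mult_ac del: mult_Suc)
qed

lemma qHermite_coeff_recurrence:
  assumes "Q \<noteq> 0" and not_root_of_unity: "\<And>j. j \<ge> 1 \<Longrightarrow> Q ^ j \<noteq> 1"
    and "p \<ge> 1" "p * Suc k \<le> n"
  shows "Q ^ p / Q ^ n * qHermite_coeff Q p s (Suc k) * (qnum Q n - qnum Q (n - p * Suc k))
         = - s * qHermite_coeff Q p s k"
proof -
  define m where "m = p * Suc k"
  have "m \<le> n"
    using assms(4) by (simp add: m_def)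
  have "Q \<noteq> 1"
    using not_root_of_unity [of 1] by simp
  have Qn: "Q ^ n = Q ^ (n - m) * Q ^ (p * k) * Q ^ p"
    using \<open>m \<le> n\<close> by (simp add: m_def flip: power_add)
  have qnum_m: "qnum (Q ^ p) (Suc k) * qnum Q p = qnum Q m"
    by (simp add: m_def qnum_power_mult)
  have "qnum Q m \<noteq> 0"
    using assms \<open>Q \<noteq> 1\<close> by (intro qnum_nonzero) (simp_all add: m_def)
  have cancel: "G / (E * F * G) * (F / N * (- s / P) * A) * (E * (N * P)) = - s * A"
    if "E \<noteq> 0" "F \<noteq> 0" "G \<noteq> 0" "N * P \<noteq> 0" for E F G N P A :: complex
    using that by (simp add: field_simps)
  show ?thesis
    unfolding qHermite_coeff_Suc m_def [symmetric] qnum_diff [OF \<open>m \<le> n\<close>] Qn qnum_m [symmetric]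
    by (rule cancel) (use assms(1) \<open>qnum Q m \<noteq> 0\<close> qnum_m in simp_all)
qed

theorem qHermite_qdifference_equation:
  assumes "Q \<noteq> 0" and not_root_of_unity: "\<And>j. j \<ge> 1 \<Longrightarrow> Q ^ j \<noteq> 1"
    and "p \<ge> 1" "x \<noteq> 0"
  shows "s * ((qderiv Q ^^ p) (\<lambda>y. qHermite n p y s Q)) x
         - Q ^ p / Q ^ n * x * qderiv Q (\<lambda>y. qHermite n p y s Q) x
         + Q ^ p / Q ^ n * qnum Q n * qHermite n p x s Q = 0"
proof -
  have "Q \<noteq> 1"
    using not_root_of_unity [of 1] by simp
  define a where "a = qHermite_coeff Q p s"
  define T where "T k = (qderiv Q ^^ (p * k)) (\<lambda>y. y ^ n) x" for k
  define c where "c = Q ^ p / Q ^ n"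
  have Dp: "((qderiv Q ^^ p) (\<lambda>y. qHermite n p y s Q)) x = (\<Sum>k\<le>n. a k * T (Suc k))"
    by (simp add: qderiv_iter_qHermite a_def T_def)
  have "x * qderiv Q (\<lambda>y. qHermite n p y s Q) x = x * (qderiv Q ^^ 1) (\<lambda>y. qHermite n p y s Q) x"
    by simp
  also have "\<dots> = (\<Sum>k\<le>n. a k * (x * (qderiv Q ^^ Suc (p * k)) (\<lambda>y. y ^ n) x))"
    unfolding qderiv_iter_qHermite a_def by (simp only: plus_1_eq_Suc sum_distrib_left mult.left_commute)
  also have "\<dots> = (\<Sum>k\<le>n. a k * qnum Q (n - p * k) * T k)"
    unfolding x_mult_qderiv_iter_power [OF assms(1) \<open>Q \<noteq> 1\<close> assms(4)] T_def by (simp only: mult.assoc)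
  finally have xD: "x * qderiv Q (\<lambda>y. qHermite n p y s Q) x = (\<Sum>k\<le>n. a k * qnum Q (n - p * k) * T k)" .
  have H: "qHermite n p x s Q = (\<Sum>k\<le>n. a k * T k)"
    by (simp add: qHermite_def qHermite_coeff_def a_def T_def)
  have T_vanish: "T k = 0" if "n < p * k" for k
    using that by (simp add: T_def qderiv_iter_power assms \<open>Q \<noteq> 1\<close> qfalling_eq_0)
  have shift: "c * a (Suc k) * (qnum Q n - qnum Q (n - p * Suc k)) * T (Suc k) = - s * a k * T (Suc k)"
    for k
  proof (cases "p * Suc k \<le> n")
    case True
    then show ?thesis
      unfolding a_def c_def using qHermite_coeff_recurrence assms by simp
  qed (simp add: T_vanish)
  have "s * (\<Sum>k\<le>n. a k * T (Suc k)) - c * (\<Sum>k\<le>n. a k * qnum Q (n - p * k) * T k)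
        + c * qnum Q n * (\<Sum>k\<le>n. a k * T k)
      = s * (\<Sum>k\<le>n. a k * T (Suc k)) + (\<Sum>k\<le>n. c * a k * (qnum Q n - qnum Q (n - p * k)) * T k)"
    by (simp add: sum_distrib_left sum_subtractf algebra_simps)
  also have "\<dots> = s * (\<Sum>k<n. a k * T (Suc k)) + (\<Sum>k<n. - s * a k * T (Suc k))"
  proof -
    have "(\<Sum>k\<le>n. a k * T (Suc k)) = (\<Sum>k<n. a k * T (Suc k))"
    proof -
      have "n < p * Suc n"
        using assms(3) by (cases p) auto
      then show ?thesis
        by (simp add: T_vanish lessThan_Suc_atMost [symmetric])
    qed
    moreover have "(\<Sum>k\<le>n. c * a k * (qnum Q n - qnum Q (n - p * k)) * T k)
        = (\<Sum>k<n. - s * a k * T (Suc k))"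
      by (simp only: sum.atMost_shift shift) simp
    ultimately show ?thesis by simp
  qed
  also have "\<dots> = 0"
    by (simp add: sum_distrib_left sum_negf mult.assoc)
  finally show ?thesis
    by (simp add: Dp xD H c_def mult.assoc)
qed

theorem mainTheorem15:
  fixes q :: real and p n :: nat and s x :: complex
  assumes "0 < q" "q < 1" "1 \<le> p" "x \<noteq> 0"
  shows "s * ((qderiv (of_real q) ^^ p) (\<lambda>y. qHermite n p y s (of_real q))) x
         - of_real (q powi (int p - int n)) * x
             * qderiv (of_real q) (\<lambda>y. qHermite n p y s (of_real q)) x
         + of_real (q powi (int p - int n)) * qnum (of_real q) n * qHermite n p x s (of_real q)
         = 0"
proof -
  have "(of_real q :: complex) ^ j \<noteq> 1" if "j \<ge> 1" for j
  proof -
    have "q ^ j < 1"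
      using assms that by (simp add: power_less_one_iff)
    then show ?thesis
      by (metis of_real_eq_1_iff of_real_power order.irrefl)
  qed
  moreover have "of_real (q powi (int p - int n)) = (of_real q :: complex) ^ p / of_real q ^ n"
    using assms by (simp add: power_int_diff)
  ultimately show ?thesis
    using qHermite_qdifference_equation [of "of_real q" p x s n] assms by simp
qed

end
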